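(* Let $0<\beta\leq 1$ and $\delta>0$. There exists a constant $M=M(\beta,\delta)$ such that the following holds for every $0<\alpha<1$, every $d$, and every finite $L$-spherical code $P\subset\mathbb{R}^d$ with $L=[-1,-\beta]\cup\{\alpha\}$. Let $G$ be the graph on vertex set $P$ in which distinct $x,y\in P$ are adjacent iff $\langle x,y\rangle\in[-1,-\beta]$. Let $U\subseteq P$ be arbitrary and let $I$ be a maximum-size independent (in $G$) subset of $U$. Then there is a subset $U'\subseteq U\setminus I$ with $|U'|\geq|U|-M|I|$ such that every vertex of $U'$ is adjacent in $G$ to at least $(1-\delta)|I|$ vertices of $I$.
   Context: For a set $L\subseteq[-1,1]$, an $L$-spherical code in $\mathbb{R}^d$ is a set $P$ of unit vectors such that $\langle x,y\rangle\in L$ for all distinct $x,y\in P$. *)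

theory Defs
  imports Complex_Main
begin

text \<open>Points of R^d are represented as functions nat => real vanishing outside {..<d},
  so that the dimension d can be quantified inside the statement.\<close>

definition vec_in :: "nat \<Rightarrow> (nat \<Rightarrow> real) \<Rightarrow> bool" where
  "vec_in d x \<longleftrightarrow> (\<forall>i\<ge>d. x i = 0)"

definition dinner :: "nat \<Rightarrow> (nat \<Rightarrow> real) \<Rightarrow> (nat \<Rightarrow> real) \<Rightarrow> real" where
  "dinner d x y = (\<Sum>i<d. x i * y i)"

definition spherical_code :: "nat \<Rightarrow> real set \<Rightarrow> (nat \<Rightarrow> real) set \<Rightarrow> bool" where
  "spherical_code d L P \<longleftrightarrow>
     (\<forall>x\<in>P. vec_in d x \<and> dinner d x x = 1) \<and>
     (\<forall>x\<in>P. \<forall>y\<in>P. x \<noteq> y \<longrightarrow> dinner d x y \<in> L)"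

definition adj :: "real \<Rightarrow> nat \<Rightarrow> (nat \<Rightarrow> real) \<Rightarrow> (nat \<Rightarrow> real) \<Rightarrow> bool" where
  "adj \<beta> d x y \<longleftrightarrow> x \<noteq> y \<and> dinner d x y \<in> {-1..-\<beta>}"

definition indep :: "real \<Rightarrow> nat \<Rightarrow> (nat \<Rightarrow> real) set \<Rightarrow> bool" where
  "indep \<beta> d I \<longleftrightarrow> (\<forall>x\<in>I. \<forall>y\<in>I. \<not> adj \<beta> d x y)"

definition max_indep_subset ::
  "real \<Rightarrow> nat \<Rightarrow> (nat \<Rightarrow> real) set \<Rightarrow> (nat \<Rightarrow> real) set \<Rightarrow> bool" where
  "max_indep_subset \<beta> d U I \<longleftrightarrow> I \<subseteq> U \<and> indep \<beta> d I \<and>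
     (\<forall>J. J \<subseteq> U \<and> indep \<beta> d J \<longrightarrow> card J \<le> card I)"

end

theory Submission
  imports Defs "HOL-Library.Ramsey"
begin

(*
  Vectors of an independent set I pairwise have inner product \<alpha>. The key estimate is a
  Cauchy-Schwarz bound: if a unit vector y has inner product at most -\<beta> with each vector of a
  set T of unit vectors with pairwise inner products at most \<alpha>, and inner product at least \<alpha>
  with each vector of a similar, sufficiently large set Z, and if the inner products between T
  and Z are on average close to \<alpha>, then |T| \<le> 2/\<beta>^2. Applied with y outside I, it shows that a vertex with fewer than (1-\<delta>)|I|
  neighbours in I has at most 2/\<beta>^2 of them; applied with y in I, that each vertex of I is
  adjacent to at most 2/\<beta>^2 such low-degree vertices. Since I is maximal, every vertex of
  U - I has a neighbour in I, so there are at most (2/\<beta>^2)|I| low-degree vertices. When |I| is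
  small, U itself is small by Ramsey's theorem, because G has no clique of more than
  1 + 1/\<beta> vertices.
*)

lemma dinner_commute: "dinner d x y = dinner d y x"
  by (simp add: dinner_def mult.commute)

lemma dinner_self_nonneg: "0 \<le> dinner d x x"
  by (simp add: dinner_def sum_nonneg)

lemma dinner_lincomb_left:
  "dinner d (\<lambda>i. a * u i + b * v i) w = a * dinner d u w + b * dinner d v w"
  by (simp add: dinner_def sum.distrib sum_distrib_left algebra_simps)

lemma dinner_lincomb_self:
  "dinner d (\<lambda>i. a * u i + b * v i) (\<lambda>i. a * u i + b * v i)
     = a\<^sup>2 * dinner d u u + 2 * a * b * dinner d u v + b\<^sup>2 * dinner d v v"
  by (simp add: dinner_lincomb_left dinner_commute[of d _ "\<lambda>i. a * u i + b * v i"]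
      dinner_commute[of d v u] power2_eq_square algebra_simps)

lemma dinner_sq_le_of_unit:
  assumes "dinner d y y = 1"
  shows "(dinner d x y)\<^sup>2 \<le> dinner d x x"
proof -
  define c where "c = dinner d x y"
  have "0 \<le> dinner d (\<lambda>i. 1 * x i + (- c) * y i) (\<lambda>i. 1 * x i + (- c) * y i)"
    by (rule dinner_self_nonneg)
  then have "0 \<le> 1\<^sup>2 * dinner d x x + 2 * 1 * (- c) * c + (- c)\<^sup>2 * dinner d y y"
    by (simp only: dinner_lincomb_self c_def)
  then show ?thesis
    using assms by (simp add: c_def power2_eq_square)
qed

definition vsum :: "(nat \<Rightarrow> real) set \<Rightarrow> nat \<Rightarrow> real" where
  "vsum A = (\<lambda>i. \<Sum>y\<in>A. y i)"

lemma dinner_vsum_left: "dinner d (vsum A) w = (\<Sum>y\<in>A. dinner d y w)"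
  unfolding dinner_def vsum_def by (simp add: sum_distrib_right sum.swap[of _ A])

lemma dinner_vsum_right: "dinner d w (vsum A) = (\<Sum>y\<in>A. dinner d w y)"
  using dinner_vsum_left[of d A w] by (simp add: dinner_commute)

lemma dinner_vsum_vsum: "dinner d (vsum A) (vsum B) = (\<Sum>x\<in>A. \<Sum>y\<in>B. dinner d x y)"
  by (subst dinner_vsum_left) (simp add: dinner_vsum_right)

lemma spherical_code_mono:
  "spherical_code d L P \<Longrightarrow> Q \<subseteq> P \<Longrightarrow> L \<subseteq> L' \<Longrightarrow> spherical_code d L' Q"
  unfolding spherical_code_def by blast

lemma dinner_vsum_self_le:
  assumes "finite S" and "spherical_code d {..c} S"
  shows "dinner d (vsum S) (vsum S) \<le> (1 - c) * card S + c * (real (card S))\<^sup>2"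
proof -
  have row: "(\<Sum>y\<in>S. dinner d x y) \<le> 1 + c * (real (card S) - 1)" if "x \<in> S" for x
  proof -
    have "(\<Sum>y\<in>S. dinner d x y) = dinner d x x + (\<Sum>y\<in>S - {x}. dinner d x y)"
      using assms(1) that by (simp add: sum.remove)
    also have "\<dots> \<le> 1 + (\<Sum>y\<in>S - {x}. c)"
      using assms(2) that by (intro add_mono sum_mono) (auto simp: spherical_code_def)
    also have "\<dots> = 1 + c * (real (card S) - 1)"
    proof -
      have "card S \<ge> 1"
        using assms(1) that by (metis One_nat_def Suc_leI card_gt_0_iff empty_iff)
      then show ?thesis
        using assms(1) that by (simp add: card_Diff_singleton of_nat_diff mult.commute)
    qed
    finally show ?thesis .
  qed
  have "dinner d (vsum S) (vsum S) = (\<Sum>x\<in>S. \<Sum>y\<in>S. dinner d x y)"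
    by (rule dinner_vsum_vsum)
  also have "\<dots> \<le> (\<Sum>x\<in>S. 1 + c * (real (card S) - 1))"
    using row by (rule sum_mono)
  also have "\<dots> = (1 - c) * card S + c * (real (card S))\<^sup>2"
    by (simp add: power2_eq_square algebra_simps)
  finally show ?thesis .
qed

lemma obtuse_code_card_le:
  fixes \<beta> :: real
  assumes "finite S" and "spherical_code d {..-\<beta>} S" and "0 < \<beta>"
  shows "(real (card S) - 1) * \<beta> \<le> 1"
proof -
  have "0 \<le> (1 + \<beta>) * card S - \<beta> * (real (card S))\<^sup>2"
    using dinner_self_nonneg[of d "vsum S"] dinner_vsum_self_le[OF assms(1,2)] by simp
  then have "0 \<le> card S * (1 - (real (card S) - 1) * \<beta>)"
    by (simp add: power2_eq_square algebra_simps)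
  then show ?thesis
    using assms(3) by (cases "card S = 0") (auto simp: zero_le_mult_iff)
qed

context
  fixes d :: nat and \<alpha> \<beta> E :: real and y :: "nat \<Rightarrow> real" and T Z :: "(nat \<Rightarrow> real) set"
  assumes unit_y: "dinner d y y = 1"
    and T: "finite T" "spherical_code d {..\<alpha>} T"
    and Z: "finite Z" "spherical_code d {..\<alpha>} Z" "Z \<noteq> {}"
    and obtuse_T: "\<forall>t\<in>T. dinner d y t \<le> - \<beta>"
    and acute_Z: "\<forall>z\<in>Z. \<alpha> \<le> dinner d y z"
    and cross_TZ: "real (card T) * (\<alpha> * card Z - E) \<le> (\<Sum>t\<in>T. \<Sum>z\<in>Z. dinner d t z)"
    and alpha_nonneg: "0 \<le> \<alpha>" and beta_pos: "0 < \<beta>"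
begin

text \<open>Cauchy-Schwarz between y and w = \<Sum>T - (|T|/|Z|) \<Sum>Z: subtracting the rescaled
  sum over Z cancels the term \<alpha>|T|^2 in the estimate of |\<Sum>T|^2.\<close>

lemma obtuse_cluster_bound:
  "(card T * (\<alpha> + \<beta>))\<^sup>2 \<le> card T * (1 - \<alpha>) + (card T)\<^sup>2 * (1 - \<alpha> + 2 * E) / card Z"
proof -
  define k m where "k = real (card T)" and "m = real (card Z)"
  define w where "w = (\<lambda>i. 1 * vsum T i + (- (k / m)) * vsum Z i)"
  have "0 < m"
    using Z by (simp add: m_def card_gt_0_iff)
  then have "0 \<le> k / m"
    by (simp add: k_def)
  have TT: "dinner d (vsum T) (vsum T) \<le> (1 - \<alpha>) * k + \<alpha> * k\<^sup>2"
    using dinner_vsum_self_le[OF T] by (simp add: k_def)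
  have ZZ: "dinner d (vsum Z) (vsum Z) \<le> (1 - \<alpha>) * m + \<alpha> * m\<^sup>2"
    using dinner_vsum_self_le[OF Z(1,2)] by (simp add: m_def)
  have TZ: "k * (\<alpha> * m - E) \<le> dinner d (vsum T) (vsum Z)"
    using cross_TZ by (simp add: dinner_vsum_vsum k_def m_def)
  have Ty: "dinner d (vsum T) y \<le> (\<Sum>t\<in>T. - \<beta>)"
    unfolding dinner_vsum_left using obtuse_T by (intro sum_mono) (simp add: dinner_commute)
  have Zy: "(\<Sum>z\<in>Z. \<alpha>) \<le> dinner d (vsum Z) y"
    unfolding dinner_vsum_left using acute_Z by (intro sum_mono) (simp add: dinner_commute)
  have wy: "dinner d w y \<le> - (k * (\<alpha> + \<beta>))"
  proof -
    have "dinner d w y = dinner d (vsum T) y - k / m * dinner d (vsum Z) y"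
      unfolding w_def dinner_lincomb_left by simp
    also have "\<dots> \<le> - \<beta> * k - k / m * (\<alpha> * m)"
      using Ty Zy \<open>0 \<le> k / m\<close> by (intro diff_mono mult_left_mono) (auto simp: k_def m_def mult.commute)
    also have "\<dots> = - (k * (\<alpha> + \<beta>))"
      using \<open>0 < m\<close> by (simp add: field_simps)
    finally show ?thesis .
  qed
  have ww: "dinner d w w \<le> k * (1 - \<alpha>) + k\<^sup>2 * (1 - \<alpha> + 2 * E) / m"
  proof -
    have "dinner d w w = dinner d (vsum T) (vsum T) - 2 * (k / m) * dinner d (vsum T) (vsum Z)
        + (k / m)\<^sup>2 * dinner d (vsum Z) (vsum Z)"
      unfolding w_def dinner_lincomb_self by simp
    also have "\<dots> \<le> ((1 - \<alpha>) * k + \<alpha> * k\<^sup>2) - 2 * (k / m) * (k * (\<alpha> * m - E))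
        + (k / m)\<^sup>2 * ((1 - \<alpha>) * m + \<alpha> * m\<^sup>2)"
      using TT TZ ZZ \<open>0 \<le> k / m\<close> by (intro add_mono diff_mono mult_left_mono) auto
    also have "\<dots> = k * (1 - \<alpha>) + k\<^sup>2 * (1 - \<alpha> + 2 * E) / m"
      using \<open>0 < m\<close> by (simp add: field_simps power2_eq_square)
    finally show ?thesis .
  qed
  have "0 \<le> k * (\<alpha> + \<beta>)"
    using alpha_nonneg beta_pos by (simp add: k_def)
  then have "(k * (\<alpha> + \<beta>))\<^sup>2 \<le> (- dinner d w y)\<^sup>2"
    using wy by (intro power_mono) auto
  also have "\<dots> = (dinner d w y)\<^sup>2"
    by simp
  also have "\<dots> \<le> dinner d w w"
    by (rule dinner_sq_le_of_unit[OF unit_y])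
  finally show ?thesis
    using ww by (simp add: k_def m_def)
qed

lemma obtuse_cluster_card_le:
  assumes "\<alpha> \<le> 1" and "0 \<le> E" and "2 * (1 + 2 * E) / \<beta>\<^sup>2 \<le> card Z"
  shows "card T \<le> 2 / \<beta>\<^sup>2"
proof -
  define k m where "k = real (card T)" and "m = real (card Z)"
  have "0 < m"
    using Z by (simp add: m_def card_gt_0_iff)
  have "0 \<le> k"
    by (simp add: k_def)
  have small: "(1 + 2 * E) / m \<le> \<beta>\<^sup>2 / 2"
    using assms(3) \<open>0 < m\<close> beta_pos by (simp add: m_def field_simps)
  have "k\<^sup>2 * \<beta>\<^sup>2 \<le> (k * (\<alpha> + \<beta>))\<^sup>2"
    using \<open>0 \<le> k\<close> alpha_nonneg beta_pos by (simp add: power_mult_distrib mult_left_mono power_mono)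
  also have "\<dots> \<le> k * (1 - \<alpha>) + k\<^sup>2 * (1 - \<alpha> + 2 * E) / m"
    using obtuse_cluster_bound by (simp add: k_def m_def)
  also have "\<dots> \<le> k + k\<^sup>2 * ((1 + 2 * E) / m)"
    using \<open>0 \<le> k\<close> \<open>0 < m\<close> alpha_nonneg
    by (intro add_mono) (auto simp: algebra_simps divide_right_mono mult_left_mono)
  also have "\<dots> \<le> k + k\<^sup>2 * (\<beta>\<^sup>2 / 2)"
    using small by (intro add_left_mono mult_left_mono) auto
  finally have "k * (k * \<beta>\<^sup>2) \<le> k * 2"
    by (simp add: power2_eq_square algebra_simps)
  then have "k * \<beta>\<^sup>2 \<le> 2"
    using \<open>0 \<le> k\<close> by (cases "k = 0") auto
  then show ?thesis
    using beta_pos by (simp add: k_def field_simps)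
qed

end

lemma adj_commute: "adj \<beta> d x y = adj \<beta> d y x"
  by (auto simp: adj_def dinner_commute)

lemma adj_dinner_le: "adj \<beta> d x y \<Longrightarrow> dinner d x y \<le> - \<beta>"
  by (simp add: adj_def)

lemma max_indep_subset_card_pos:
  assumes "max_indep_subset \<beta> d U I" and "U \<noteq> {}"
  shows "0 < card I"
proof -
  obtain x where "x \<in> U"
    using assms(2) by blast
  moreover have "Defs.indep \<beta> d {x}"
    by (simp add: Defs.indep_def adj_def)
  ultimately have "card {x} \<le> card I"
    using assms(1) unfolding max_indep_subset_def by blast
  then show ?thesis
    by simp
qed

lemma max_indep_subset_dominating:
  assumes "max_indep_subset \<beta> d U I" and "finite U" and "x \<in> U - I"
  shows "\<exists>y\<in>I. adj \<beta> d x y"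
proof (rule ccontr)
  assume "\<not> (\<exists>y\<in>I. adj \<beta> d x y)"
  then have "Defs.indep \<beta> d (insert x I)"
    using assms(1) adj_commute[of \<beta> d x]
    by (auto simp: max_indep_subset_def Defs.indep_def adj_def)
  moreover have "insert x I \<subseteq> U"
    using assms by (auto simp: max_indep_subset_def)
  ultimately have "card (insert x I) \<le> card I"
    using assms(1) unfolding max_indep_subset_def by blast
  moreover have "finite I"
    using assms(1,2) finite_subset by (auto simp: max_indep_subset_def)
  ultimately show False
    using assms(3) by simp
qed

lemma card_le_mult_card_max_indep_subset:
  assumes "max_indep_subset \<beta> d U I" and "card U < r" and "real r \<le> M"
  shows "real (card U) \<le> M * card I"
proof (cases "U = {}")
  case True
  then show ?thesis
    using assms(3) by simp
next
  case False
  then have "1 \<le> real (card I)"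
    using max_indep_subset_card_pos[OF assms(1)] by simp
  then have "M \<le> M * card I"
    using assms(3) mult_left_mono[of 1 "card I" M] by simp
  then show ?thesis
    using assms(2,3) by linarith
qed

lemma obtuse_ramsey:
  fixes \<beta> :: real
  assumes "0 < \<beta>"
  shows "\<exists>r. \<forall>d L U. finite U \<and> spherical_code d L U \<and>
           (\<forall>J\<subseteq>U. Defs.indep \<beta> d J \<longrightarrow> card J < s) \<longrightarrow> card U < r"
proof -
  define K where "K = nat \<lfloor>1 / \<beta>\<rfloor> + 2"
  have "1 / \<beta> < real K - 1"
    using assms by (simp add: K_def) linarith
  then have K: "1 < (real K - 1) * \<beta>"
    using assms by (simp add: field_simps)
  obtain r where r: "\<forall>(V :: (nat \<Rightarrow> real) set) E. finite V \<and> r \<le> card V \<longrightarrow>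
      (\<exists>R\<subseteq>V. card R = K \<and> clique R E \<or> card R = s \<and> Ramsey.indep R E)"
    using ramsey2[of K s] by blast
  have "card U < r"
    if U: "finite U" "spherical_code d L U" and small: "\<forall>J\<subseteq>U. Defs.indep \<beta> d J \<longrightarrow> card J < s"
    for d L U
  proof (rule ccontr)
    define E where "E = {{x, y} | x y. adj \<beta> d x y}"
    have E_iff: "{x, y} \<in> E \<longleftrightarrow> adj \<beta> d x y" for x y
      by (auto simp: E_def doubleton_eq_iff adj_commute)
    assume "\<not> card U < r"
    then obtain R where "R \<subseteq> U" and "card R = K \<and> clique R E \<or> card R = s \<and> Ramsey.indep R E"
      using r U(1) by (meson not_less)
    then show False
    proof (elim disjE conjE)
      assume "card R = K" and "clique R E"
      then have "spherical_code d {..-\<beta>} R"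
        using U(2) \<open>R \<subseteq> U\<close> by (auto simp: spherical_code_def clique_def E_iff adj_def)
      then have "(real K - 1) * \<beta> \<le> 1"
        using obtuse_code_card_le[of R d \<beta>] \<open>card R = K\<close> \<open>R \<subseteq> U\<close> U(1) assms
        by (simp add: finite_subset)
      with K show False
        by simp
    next
      assume "card R = s" and "Ramsey.indep R E"
      then have "Defs.indep \<beta> d R"
        by (auto simp: Defs.indep_def Ramsey.indep_def E_iff adj_def)
      then show False
        using small \<open>R \<subseteq> U\<close> \<open>card R = s\<close> by auto
    qed
  qed
  then show ?thesis
    by blast
qed

definition indep_size_threshold :: "real \<Rightarrow> real \<Rightarrow> real" where
  "indep_size_threshold \<beta> \<delta> = max (2 / (\<beta>\<^sup>2 * \<delta>)) (2 * (1 + 4 * (2 / \<beta>\<^sup>2)) / \<beta>\<^sup>2 + 1)"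

locale code_graph =
  fixes \<alpha> \<beta> :: real and d :: nat and P :: "(nat \<Rightarrow> real) set"
  assumes alpha_pos: "0 < \<alpha>" and alpha_less_one: "\<alpha> < 1" and beta_pos: "0 < \<beta>"
    and finite_code: "finite P"
    and code: "spherical_code d ({-1..-\<beta>} \<union> {\<alpha>}) P"
begin

lemma alpha_nonneg: "0 \<le> \<alpha>" and alpha_le_one: "\<alpha> \<le> 1"
  using alpha_pos alpha_less_one by simp_all

lemma dinner_self_eq_one: "x \<in> P \<Longrightarrow> dinner d x x = 1"
  using code by (simp add: spherical_code_def)

lemma subset_code_le_alpha: "Q \<subseteq> P \<Longrightarrow> spherical_code d {..\<alpha>} Q"
  using code by (rule spherical_code_mono) (use alpha_pos beta_pos in auto)

lemma dinner_ge_minus_one: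
  assumes "x \<in> P" and "y \<in> P" and "x \<noteq> y"
  shows "-1 \<le> dinner d x y"
proof -
  have "dinner d x y \<in> {-1..-\<beta>} \<union> {\<alpha>}"
    using code assms by (simp add: spherical_code_def)
  then show ?thesis
    using alpha_pos by auto
qed

lemma dinner_eq_alpha_if_not_adj:
  "x \<in> P \<Longrightarrow> y \<in> P \<Longrightarrow> x \<noteq> y \<Longrightarrow> \<not> adj \<beta> d x y \<Longrightarrow> dinner d x y = \<alpha>"
  using code by (auto simp: spherical_code_def adj_def)

lemma sum_dinner_ge_card_adj:
  assumes "x \<in> P" and "Z \<subseteq> P" and "x \<notin> Z"
  shows "\<alpha> * card Z - 2 * card {z\<in>Z. adj \<beta> d x z} \<le> (\<Sum>z\<in>Z. dinner d x z)"
proof -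
  have "finite Z"
    using assms(2) finite_code finite_subset by blast
  have "(\<Sum>z\<in>Z. \<alpha> - (if adj \<beta> d x z then 2 else 0)) \<le> (\<Sum>z\<in>Z. dinner d x z)"
  proof (rule sum_mono)
    fix z
    assume "z \<in> Z"
    then have "z \<in> P" and "x \<noteq> z"
      using assms by auto
    then show "\<alpha> - (if adj \<beta> d x z then 2 else 0) \<le> dinner d x z"
      using dinner_ge_minus_one dinner_eq_alpha_if_not_adj assms(1) alpha_less_one by force
  qed
  then show ?thesis
    using \<open>finite Z\<close> by (simp add: sum_subtractf sum.If_cases Int_def conj_commute mult.commute)
qed

lemma card_adj_le_if_card_not_adj_ge:
  assumes "I \<subseteq> P" and "Defs.indep \<beta> d I" and "x \<in> P - I"
    and "2 / \<beta>\<^sup>2 \<le> card {y\<in>I. \<not> adj \<beta> d x y}"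
  shows "card {y\<in>I. adj \<beta> d x y} \<le> 2 / \<beta>\<^sup>2"
proof -
  define T Z where "T = {y\<in>I. adj \<beta> d x y}" and "Z = {y\<in>I. \<not> adj \<beta> d x y}"
  have "finite I"
    using assms(1) finite_code finite_subset by blast
  have "finite T" and "finite Z" and "T \<subseteq> P" and "Z \<subseteq> P"
    using assms(1) \<open>finite I\<close> by (auto simp: T_def Z_def)
  have large: "2 / \<beta>\<^sup>2 \<le> card Z"
    using assms(4) by (simp add: Z_def)
  have "0 < 2 / \<beta>\<^sup>2"
    using beta_pos by simp
  then have "Z \<noteq> {}"
    using assms(4) unfolding Z_def[symmetric] by auto
  have "dinner d t z = \<alpha>" if "t \<in> T" and "z \<in> Z" for t z
    using that assms(1,2) by (intro dinner_eq_alpha_if_not_adj) (auto simp: T_def Z_def Defs.indep_def)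
  then have cross: "real (card T) * (\<alpha> * card Z - 0) \<le> (\<Sum>t\<in>T. \<Sum>z\<in>Z. dinner d t z)"
    by simp
  have acute: "\<forall>z\<in>Z. \<alpha> \<le> dinner d x z"
    using assms(1,3) dinner_eq_alpha_if_not_adj by (force simp: Z_def)
  have obtuse: "\<forall>t\<in>T. dinner d x t \<le> - \<beta>"
    by (simp add: T_def adj_dinner_le)
  show ?thesis
    unfolding T_def[symmetric]
    by (rule obtuse_cluster_card_le[where \<alpha> = \<alpha> and \<beta> = \<beta> and d = d and y = x and E = 0])
      (use assms(3) \<open>finite T\<close> \<open>finite Z\<close> \<open>T \<subseteq> P\<close> \<open>Z \<subseteq> P\<close> \<open>Z \<noteq> {}\<close>
        cross acute obtuse large in \<open>simp_all add: dinner_self_eq_one subset_code_le_alpha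
          alpha_nonneg alpha_le_one beta_pos\<close>)
qed

lemma card_adj_low_degree_le:
  fixes C :: real
  assumes "I \<subseteq> P" and "Defs.indep \<beta> d I" and "y \<in> I" and "B \<subseteq> P - I"
    and low_degree: "\<forall>x\<in>B. card {z\<in>I. adj \<beta> d x z} \<le> C" and "0 \<le> C"
    and "2 * (1 + 4 * C) / \<beta>\<^sup>2 \<le> real (card I) - 1"
  shows "card {x\<in>B. adj \<beta> d x y} \<le> 2 / \<beta>\<^sup>2"
proof -
  define T Z where "T = {x\<in>B. adj \<beta> d x y}" and "Z = I - {y}"
  have "finite I"
    using assms(1) finite_code finite_subset by blast
  have "y \<in> P" and "T \<subseteq> P" and "Z \<subseteq> P"
    using assms(1,3,4) by (auto simp: T_def Z_def)
  then have "finite T" and "finite Z"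
    using finite_code finite_subset by auto
  have "real (card Z) = real (card I) - 1"
    using assms(3) \<open>finite I\<close> card_gt_0_iff[of I] by (auto simp: Z_def of_nat_diff)
  then have large: "2 * (1 + 4 * C) / \<beta>\<^sup>2 \<le> card Z"
    using assms(7) by simp
  moreover have "0 < 2 * (1 + 4 * C) / \<beta>\<^sup>2"
    using \<open>0 \<le> C\<close> beta_pos by simp
  ultimately have "Z \<noteq> {}"
    by auto
  have row: "\<alpha> * card Z - 2 * C \<le> (\<Sum>z\<in>Z. dinner d t z)" if "t \<in> T" for t
  proof -
    have "card {z\<in>Z. adj \<beta> d t z} \<le> card {z\<in>I. adj \<beta> d t z}"
      using \<open>finite I\<close> by (intro card_mono) (auto simp: Z_def)
    also have "\<dots> \<le> C"
      using low_degree that by (simp add: T_def)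
    finally show ?thesis
      using sum_dinner_ge_card_adj[of t Z] that assms(4) \<open>Z \<subseteq> P\<close> by (auto simp: T_def Z_def)
  qed
  have cross: "real (card T) * (\<alpha> * card Z - 2 * C) \<le> (\<Sum>t\<in>T. \<Sum>z\<in>Z. dinner d t z)"
    using sum_mono[of T "\<lambda>_. \<alpha> * card Z - 2 * C"] row by simp
  have acute: "\<forall>z\<in>Z. \<alpha> \<le> dinner d y z"
  proof
    fix z
    assume "z \<in> Z"
    then have "z \<in> I" and "y \<noteq> z"
      by (auto simp: Z_def)
    moreover from this have "\<not> adj \<beta> d y z"
      using assms(2,3) by (simp add: Defs.indep_def)
    ultimately show "\<alpha> \<le> dinner d y z"
      using assms(1,3) dinner_eq_alpha_if_not_adj by auto
  qed
  have obtuse: "\<forall>t\<in>T. dinner d y t \<le> - \<beta>"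
    using adj_dinner_le dinner_commute by (metis (no_types, lifting) T_def mem_Collect_eq)
  show ?thesis
    unfolding T_def[symmetric]
    by (rule obtuse_cluster_card_le[where \<alpha> = \<alpha> and \<beta> = \<beta> and d = d and y = y and E = "2 * C"])
      (use assms(6) \<open>y \<in> P\<close> \<open>finite T\<close> \<open>finite Z\<close> \<open>T \<subseteq> P\<close> \<open>Z \<subseteq> P\<close> \<open>Z \<noteq> {}\<close>
        cross acute obtuse large in \<open>simp_all add: dinner_self_eq_one subset_code_le_alpha
          alpha_nonneg alpha_le_one beta_pos\<close>)
qed

lemma exists_high_degree_subset:
  fixes \<delta> :: real
  assumes "U \<subseteq> P" and max: "max_indep_subset \<beta> d U I"
    and "0 < \<delta>" and "indep_size_threshold \<beta> \<delta> \<le> card I"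
  shows "\<exists>U'\<subseteq>U - I. real (card U) - (1 + 2 / \<beta>\<^sup>2) * card I \<le> card U' \<and>
           (\<forall>x\<in>U'. (1 - \<delta>) * card I \<le> card {y\<in>I. adj \<beta> d x y})"
proof -
  define C where "C = 2 / \<beta>\<^sup>2"
  have "C \<le> \<delta> * card I" and "2 * (1 + 4 * C) / \<beta>\<^sup>2 \<le> real (card I) - 1"
    using assms(3,4) beta_pos by (simp_all add: indep_size_threshold_def C_def field_simps)
  define B where "B = {x\<in>U - I. real (card {y\<in>I. adj \<beta> d x y}) < (1 - \<delta>) * card I}"
  have "I \<subseteq> U" and indep: "Defs.indep \<beta> d I"
    using max by (auto simp: max_indep_subset_def)
  have "finite U"
    using assms(1) finite_code finite_subset by blast
  then have "finite I"
    using \<open>I \<subseteq> U\<close> finite_subset by blast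
  have "I \<subseteq> P" and "B \<subseteq> P - I"
    using assms(1) \<open>I \<subseteq> U\<close> by (auto simp: B_def)
  have low_degree: "\<forall>x\<in>B. card {y\<in>I. adj \<beta> d x y} \<le> C"
  proof
    fix x
    assume "x \<in> B"
    have "card {y\<in>I. adj \<beta> d x y} + card {y\<in>I. \<not> adj \<beta> d x y} = card I"
      using \<open>finite I\<close> by (subst card_Un_disjoint[symmetric]) (auto intro: arg_cong[where f = card])
    then have "real (card {y\<in>I. adj \<beta> d x y}) + card {y\<in>I. \<not> adj \<beta> d x y} = card I"
      by (simp only: of_nat_add[symmetric] of_nat_eq_iff)
    then have "2 / \<beta>\<^sup>2 \<le> card {y\<in>I. \<not> adj \<beta> d x y}"
      using \<open>x \<in> B\<close> \<open>C \<le> \<delta> * card I\<close> by (simp add: B_def C_def algebra_simps)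
    then show "card {y\<in>I. adj \<beta> d x y} \<le> C"
      unfolding C_def
      by (rule card_adj_le_if_card_not_adj_ge[OF \<open>I \<subseteq> P\<close> indep subsetD[OF \<open>B \<subseteq> P - I\<close> \<open>x \<in> B\<close>]])
  qed
  have "B \<subseteq> (\<Union>y\<in>I. {x\<in>B. adj \<beta> d x y})"
    using max_indep_subset_dominating[OF max \<open>finite U\<close>] by (auto simp: B_def)
  then have "card B \<le> card (\<Union>y\<in>I. {x\<in>B. adj \<beta> d x y})"
    using \<open>finite I\<close> \<open>finite U\<close> by (intro card_mono) (auto simp: B_def)
  also have "\<dots> \<le> (\<Sum>y\<in>I. card {x\<in>B. adj \<beta> d x y})"
    using \<open>finite I\<close> by (rule card_UN_le)
  finally have "real (card B) \<le> (\<Sum>y\<in>I. real (card {x\<in>B. adj \<beta> d x y}))"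
    unfolding of_nat_sum[symmetric] by (rule of_nat_mono)
  also have "\<dots> \<le> (\<Sum>y\<in>I. C)"
  proof (rule sum_mono)
    fix y
    assume "y \<in> I"
    have "0 \<le> C"
      by (simp add: C_def)
    then show "card {x\<in>B. adj \<beta> d x y} \<le> C"
      using card_adj_low_degree_le[OF \<open>I \<subseteq> P\<close> indep \<open>y \<in> I\<close> \<open>B \<subseteq> P - I\<close> low_degree]
        \<open>2 * (1 + 4 * C) / \<beta>\<^sup>2 \<le> real (card I) - 1\<close> by (simp add: C_def)
  qed
  finally have card_B: "card B \<le> C * card I"
    by (simp add: mult.commute)
  define U' where "U' = U - I - B"
  have "card U \<le> card (U' \<union> I \<union> B)"
    using \<open>finite U\<close> \<open>finite I\<close> by (intro card_mono) (auto simp: U'_def B_def)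
  also have "\<dots> \<le> card (U' \<union> I) + card B"
    by (rule card_Un_le)
  also have "\<dots> \<le> card U' + card I + card B"
    using card_Un_le[of U' I] by simp
  finally have "real (card U) \<le> card U' + card I + card B"
    by (simp only: of_nat_add[symmetric] of_nat_le_iff)
  moreover have "(1 + C) * card I = card I + C * card I"
    by (simp add: algebra_simps)
  ultimately have "real (card U) - (1 + C) * card I \<le> card U'"
    using card_B by linarith
  moreover have "\<forall>x\<in>U'. (1 - \<delta>) * card I \<le> card {y\<in>I. adj \<beta> d x y}"
    by (auto simp: U'_def B_def not_less)
  ultimately show ?thesis
    unfolding C_def by (intro exI[of _ U']) (auto simp: U'_def)
qed

end

theorem lemma6:
  fixes \<beta> \<delta> :: real
  assumes "0 < \<beta>" and "\<beta> \<le> 1" and "0 < \<delta>"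
  shows "\<exists>M::real. \<forall>\<alpha>::real. \<forall>d::nat. \<forall>P U I.
     0 < \<alpha> \<and> \<alpha> < 1 \<and> finite P \<and> spherical_code d ({-1..-\<beta>} \<union> {\<alpha>}) P \<and>
     U \<subseteq> P \<and> max_indep_subset \<beta> d U I \<longrightarrow>
     (\<exists>U'. U' \<subseteq> U - I \<and> real (card U') \<ge> real (card U) - M * real (card I) \<and>
        (\<forall>x\<in>U'. real (card {y\<in>I. adj \<beta> d x y}) \<ge> (1 - \<delta>) * real (card I)))"
proof -
  define t where "t = indep_size_threshold \<beta> \<delta>"
  obtain r where r: "\<forall>d L U. finite U \<and> spherical_code d L U \<and>
      (\<forall>J\<subseteq>U. Defs.indep \<beta> d J \<longrightarrow> card J < nat \<lceil>t\<rceil>) \<longrightarrow> card U < r"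
    using obtuse_ramsey[OF assms(1)] by blast
  show ?thesis
  proof (intro exI[of _ "max (1 + 2 / \<beta>\<^sup>2) r"] allI impI, elim conjE)
    fix \<alpha> d P U I
    assume "0 < \<alpha>" and "\<alpha> < 1" and "finite P" and code: "spherical_code d ({-1..-\<beta>} \<union> {\<alpha>}) P"
      and "U \<subseteq> P" and max: "max_indep_subset \<beta> d U I"
    interpret code_graph \<alpha> \<beta> d P
      by unfold_locales (use assms(1) \<open>0 < \<alpha>\<close> \<open>\<alpha> < 1\<close> \<open>finite P\<close> code in auto)
    show "\<exists>U'. U' \<subseteq> U - I \<and> real (card U) - max (1 + 2 / \<beta>\<^sup>2) r * card I \<le> card U' \<and>
        (\<forall>x\<in>U'. (1 - \<delta>) * card I \<le> card {y\<in>I. adj \<beta> d x y})"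
    proof (cases "t \<le> card I")
      case True
      then obtain U' where "U' \<subseteq> U - I" and "real (card U) - (1 + 2 / \<beta>\<^sup>2) * card I \<le> card U'"
        and "\<forall>x\<in>U'. (1 - \<delta>) * card I \<le> card {y\<in>I. adj \<beta> d x y}"
        using exists_high_degree_subset[OF \<open>U \<subseteq> P\<close> max assms(3)] unfolding t_def by blast
      moreover have "(1 + 2 / \<beta>\<^sup>2) * card I \<le> max (1 + 2 / \<beta>\<^sup>2) r * card I"
        by (intro mult_right_mono) auto
      ultimately show ?thesis
        by (intro exI[of _ U']) auto
    next
      case False
      then have "real (card I) < real (nat \<lceil>t\<rceil>)"
        using real_nat_ceiling_ge[of t] by linarith
      then have "\<forall>J\<subseteq>U. Defs.indep \<beta> d J \<longrightarrow> card J < nat \<lceil>t\<rceil>"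
        using max unfolding max_indep_subset_def of_nat_less_iff by (meson le_less_trans)
      then have "card U < r"
        using r spherical_code_mono[OF code \<open>U \<subseteq> P\<close> order_refl] \<open>finite P\<close> \<open>U \<subseteq> P\<close>
        by (meson finite_subset)
      then show ?thesis
        using card_le_mult_card_max_indep_subset[OF max] by (intro exI[of _ "{}"]) auto
    qed
  qed
qed

end
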